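(* Let $a,b,c\in\mathbb{C}$ with $|a|\le1$, let $\psi=K_c$, i.e. $\psi(z)=e^{\bar c z}$, and $\varphi(z)=az+b$, and suppose that $C_{\psi,\varphi}$ is bounded on $\mathcal{F}^2$. (a) If $|a|<1$, then $\|C_{\psi,\varphi}\|=\left|e^{\frac{\bar c b}{1-a}}\right|\exp\!\left(\frac12\,\frac{\left|\frac{c(1-a)}{\bar a-1}+b\right|^2}{1-|a|^2}\right)$. (b) If $|a|=1$ and $a\neq1$, then $\|C_{\psi,\varphi}\|=\left|e^{\frac{|b|^2}{1-\bar a}}\right|$. (c) If $a=1$, then $\|C_{\psi,\varphi}\|=e^{\frac{|b|^2}{2}}$.
   Context: $\mathcal{F}^2$ is the Fock space: the Hilbert space of entire functions $f$ on $\mathbb{C}$ with $\int_{\mathbb{C}}|f(z)|^2\,d\mu(z)<\infty$, where $d\mu(z)=\pi^{-1}e^{-|z|^2}\,dA(z)$, with inner product $\langle f,g\rangle=\int f\overline{g}\,d\mu$. Its reproducing kernel at $w$ is $K_w(z)=e^{\bar w z}$. The weighted composition operator is $C_{\psi,\varphi}f=\psi\cdot(f\circ\varphi)$. *)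

theory Defs
  imports "HOL-Analysis.Analysis"
begin

definition fock_nn :: "(complex \<Rightarrow> complex) \<Rightarrow> ennreal" where
  "fock_nn f = (\<integral>\<^sup>+ z. ennreal ((cmod (f z))\<^sup>2 * exp (- (cmod z)\<^sup>2) / pi) \<partial>lborel)"

definition fock_space :: "(complex \<Rightarrow> complex) set" where
  "fock_space = {f. f holomorphic_on UNIV \<and> fock_nn f < \<infinity>}"

definition fock_norm :: "(complex \<Rightarrow> complex) \<Rightarrow> real" where
  "fock_norm f = sqrt (enn2real (fock_nn f))"

definition fock_kernel :: "complex \<Rightarrow> complex \<Rightarrow> complex" where
  "fock_kernel w = (\<lambda>z. exp (cnj w * z))"

definition wcomp :: "(complex \<Rightarrow> complex) \<Rightarrow> (complex \<Rightarrow> complex) \<Rightarrow>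
    (complex \<Rightarrow> complex) \<Rightarrow> (complex \<Rightarrow> complex)" where
  "wcomp \<psi> \<phi> f = (\<lambda>z. \<psi> z * f (\<phi> z))"

definition fock_bounded :: "((complex \<Rightarrow> complex) \<Rightarrow> (complex \<Rightarrow> complex)) \<Rightarrow> bool" where
  "fock_bounded T \<longleftrightarrow> (\<forall>f\<in>fock_space. T f \<in> fock_space) \<and>
     (\<exists>M. \<forall>f\<in>fock_space. fock_norm (T f) \<le> M * fock_norm f)"

definition fock_op_norm :: "((complex \<Rightarrow> complex) \<Rightarrow> (complex \<Rightarrow> complex)) \<Rightarrow> real" where
  "fock_op_norm T = Sup {fock_norm (T f) | f. f \<in> fock_space \<and> fock_norm f \<le> 1}"

end

(* On reproducing kernels the operator acts by C K_q = exp (cnj q b) K_(c + cnj a q), so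
   |C K_q|^2 / |K_q|^2 = exp E(q) with E(q) = |c|^2 + 2 Re (cnj q (b + a c)) - (1 - |a|^2) |q|^2.

   For |a| = 1, E is affine in q, so boundedness forces b + a c = 0; then the substitution
   v = a z + b shows that C is exp (|c|^2 / 2) times an isometry.

   For |a| < 1, E is maximal at q = (b + a c) / (1 - |a|^2).  Completing the square and
   substituting v = a z + b writes |C f|^2 as exp (E(q) + |q|^2) times the Gaussian mean of
   variance |a|^2, centred at q, of |g|^2 with g(v) = f(v) exp (- cnj q v), while |f|^2 is
   exp (|q|^2) times the Gaussian mean of variance 1 of the same function.  As |g|^2 is
   subharmonic, its Gaussian means increase with the variance (heat semigroup plus the
   sub-mean-value property, which is obtained by averaging g over roots of unity), hence
   |C f|^2 <= exp E(q) |f|^2, with equality at f = K_q. *)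

theory Submission
  imports Defs "HOL-Probability.Probability" "HOL-Complex_Analysis.Complex_Analysis"
begin

section \<open>Lebesgue measure on the complex plane\<close>

lemma borel_measurable_Complex_pair [measurable]:
  "(\<lambda>p. Complex (fst p) (snd p)) \<in> borel_measurable (borel :: (real \<times> real) measure)"
  by (intro borel_measurable_continuous_onI) (simp add: Complex_eq, intro continuous_intros)

lemma lborel_complex_eq_distr_Complex:
  "(lborel :: complex measure) = distr lborel borel (\<lambda>p. Complex (fst p) (snd p))"
proof (rule lborel_eqI)
  fix l u :: complex
  assume le: "\<And>b. b \<in> Basis \<Longrightarrow> l \<bullet> b \<le> u \<bullet> b"
  have preimage: "(\<lambda>p. Complex (fst p) (snd p)) -` box l u = box (Re l, Im l) (Re u, Im u)"
    by (auto simp: box_def Basis_complex_def Basis_prod_def inner_complex_def)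
  have "emeasure (distr lborel borel (\<lambda>p. Complex (fst p) (snd p))) (box l u)
      = emeasure lborel (box (Re l, Im l) (Re u, Im u))"
    by (subst emeasure_distr) (auto simp: preimage measurable_lborel2)
  also have "\<dots> = (\<Prod>b\<in>Basis. (u - l) \<bullet> b)"
    using le[of 1] le[of \<i>]
    by (simp add: emeasure_lborel_box_eq Basis_complex_def Basis_prod_def inner_complex_def
        ennreal_mult mult.commute)
  finally show "emeasure (distr lborel borel (\<lambda>p. Complex (fst p) (snd p))) (box l u)
      = (\<Prod>b\<in>Basis. (u - l) \<bullet> b)" .
qed simp

lemma nn_integral_lborel_complex:
  fixes F :: "complex \<Rightarrow> ennreal"
  assumes [measurable]: "F \<in> borel_measurable borel"
  shows "(\<integral>\<^sup>+z. F z \<partial>lborel) = (\<integral>\<^sup>+x. \<integral>\<^sup>+y. F (Complex x y) \<partial>lborel \<partial>lborel)"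
proof -
  have "(\<integral>\<^sup>+z. F z \<partial>lborel) = (\<integral>\<^sup>+p. F (Complex (fst p) (snd p)) \<partial>(lborel \<Otimes>\<^sub>M lborel))"
    by (subst lborel_complex_eq_distr_Complex) (simp add: nn_integral_distr lborel_prod)
  also have "\<dots> = (\<integral>\<^sup>+x. \<integral>\<^sup>+y. F (Complex x y) \<partial>lborel \<partial>lborel)"
    by (subst lborel.nn_integral_fst[symmetric]) (simp_all add: lborel_prod)
  finally show ?thesis .
qed

lemma nn_integral_lborel_complex':
  fixes F :: "complex \<Rightarrow> ennreal"
  assumes [measurable]: "F \<in> borel_measurable borel"
  shows "(\<integral>\<^sup>+z. F z \<partial>lborel) = (\<integral>\<^sup>+y. \<integral>\<^sup>+x. F (Complex x y) \<partial>lborel \<partial>lborel)"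
proof -
  have m: "(\<lambda>(x, y). F (Complex x y)) \<in> borel_measurable (lborel \<Otimes>\<^sub>M lborel)"
    using measurable_comp[OF borel_measurable_Complex_pair assms]
    by (simp add: lborel_prod o_def case_prod_beta')
  show ?thesis
    unfolding nn_integral_lborel_complex[OF assms] using lborel_pair.Fubini'[OF m] by simp
qed

lemma nn_integral_lborel_shear_Re:
  fixes F :: "complex \<Rightarrow> ennreal"
  assumes [measurable]: "F \<in> borel_measurable borel"
  shows "(\<integral>\<^sup>+z. F (z + of_real (k * Im z)) \<partial>lborel) = (\<integral>\<^sup>+z. F z \<partial>lborel)"
proof -
  have "(\<integral>\<^sup>+z. F (z + of_real (k * Im z)) \<partial>lborel)
      = (\<integral>\<^sup>+y. \<integral>\<^sup>+x. F (Complex (k * y + 1 * x) y) \<partial>lborel \<partial>lborel)"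
    by (subst nn_integral_lborel_complex') (simp_all add: Complex_eq algebra_simps)
  also have "\<dots> = (\<integral>\<^sup>+y. \<integral>\<^sup>+x. F (Complex x y) \<partial>lborel \<partial>lborel)"
  proof (rule nn_integral_cong)
    fix y :: real
    have m: "(\<lambda>x. F (Complex x y)) \<in> borel_measurable borel"
      by (rule measurable_compose[OF _ assms]) (simp add: Complex_eq)
    show "(\<integral>\<^sup>+x. F (Complex (k * y + 1 * x) y) \<partial>lborel) = (\<integral>\<^sup>+x. F (Complex x y) \<partial>lborel)"
      using nn_integral_real_affine[OF m, of 1 "k * y"] by simp
  qed
  finally show ?thesis
    by (simp add: nn_integral_lborel_complex')
qed

lemma nn_integral_lborel_shear_Im:
  fixes F :: "complex \<Rightarrow> ennreal"
  assumes [measurable]: "F \<in> borel_measurable borel"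
  shows "(\<integral>\<^sup>+z. F (z + \<i> * of_real (k * Re z)) \<partial>lborel) = (\<integral>\<^sup>+z. F z \<partial>lborel)"
proof -
  have "(\<integral>\<^sup>+z. F (z + \<i> * of_real (k * Re z)) \<partial>lborel)
      = (\<integral>\<^sup>+x. \<integral>\<^sup>+y. F (Complex x (k * x + 1 * y)) \<partial>lborel \<partial>lborel)"
    by (subst nn_integral_lborel_complex) (simp_all add: Complex_eq algebra_simps)
  also have "\<dots> = (\<integral>\<^sup>+x. \<integral>\<^sup>+y. F (Complex x y) \<partial>lborel \<partial>lborel)"
  proof (rule nn_integral_cong)
    fix x :: real
    have m: "(\<lambda>y. F (Complex x y)) \<in> borel_measurable borel"
      by (rule measurable_compose[OF _ assms]) (simp add: Complex_eq)
    show "(\<integral>\<^sup>+y. F (Complex x (k * x + 1 * y)) \<partial>lborel) = (\<integral>\<^sup>+y. F (Complex x y) \<partial>lborel)"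
      using nn_integral_real_affine[OF m, of 1 "k * x"] by simp
  qed
  finally show ?thesis
    by (simp add: nn_integral_lborel_complex)
qed

text \<open>A rotation by \<open>w = p + \<i> q\<close> with \<open>q \<noteq> 0\<close> is the product of three shears
  (Paeth's decomposition), each of which preserves Lebesgue measure by Fubini.\<close>

lemma nn_integral_lborel_rotation_shears:
  fixes F :: "complex \<Rightarrow> ennreal"
  assumes [measurable]: "F \<in> borel_measurable borel" and w: "cmod w = 1" and "Im w \<noteq> 0"
  shows "(\<integral>\<^sup>+z. F (w * z) \<partial>lborel) = (\<integral>\<^sup>+z. F z \<partial>lborel)"
proof -
  define p q where "p = Re w" and "q = Im w"
  have pq: "p\<^sup>2 + q\<^sup>2 = 1" using w by (simp add: p_def q_def cmod_def)
  have q0: "q \<noteq> 0" using \<open>Im w \<noteq> 0\<close> by (simp add: q_def)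
  define k where "k = (p - 1) / q"
  define shear_Re where "shear_Re z = z + of_real (k * Im z)" for z
  define shear_Im where "shear_Im z = z + \<i> * of_real (q * Re z)" for z
  have [measurable]: "shear_Re \<in> borel_measurable borel" "shear_Im \<in> borel_measurable borel"
    unfolding shear_Re_def shear_Im_def by measurable
  have "k + k * p = (p\<^sup>2 - 1) / q"
    using q0 by (simp add: k_def field_simps power2_eq_square)
  also have "\<dots> = - q"
    using q0 pq by (simp add: field_simps power2_eq_square)
  finally have kq: "1 + k * q = p" "k + k * p = - q"
    using q0 by (simp_all add: k_def)
  have "w * z = shear_Re (shear_Im (shear_Re z))" for z
  proof (rule complex_eqI)
    have "Re (shear_Re (shear_Im (shear_Re z))) = (1 + k * q) * Re z + (k + k * (1 + k * q)) * Im z"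
      by (simp add: shear_Re_def shear_Im_def algebra_simps)
    then show "Re (w * z) = Re (shear_Re (shear_Im (shear_Re z)))"
      using kq by (simp add: p_def q_def)
    have "Im (shear_Re (shear_Im (shear_Re z))) = q * Re z + (1 + k * q) * Im z"
      by (simp add: shear_Re_def shear_Im_def algebra_simps)
    then show "Im (w * z) = Im (shear_Re (shear_Im (shear_Re z)))"
      using kq by (simp add: p_def q_def)
  qed
  then have "(\<integral>\<^sup>+z. F (w * z) \<partial>lborel) = (\<integral>\<^sup>+z. F (shear_Re (shear_Im (shear_Re z))) \<partial>lborel)"
    by simp
  also have "\<dots> = (\<integral>\<^sup>+z. F (shear_Re (shear_Im z)) \<partial>lborel)"
    using nn_integral_lborel_shear_Re[of "\<lambda>z. F (shear_Re (shear_Im z))" k] by (simp add: shear_Re_def)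
  also have "\<dots> = (\<integral>\<^sup>+z. F (shear_Re z) \<partial>lborel)"
    using nn_integral_lborel_shear_Im[of "\<lambda>z. F (shear_Re z)" q] by (simp add: shear_Im_def)
  also have "\<dots> = (\<integral>\<^sup>+z. F z \<partial>lborel)"
    using nn_integral_lborel_shear_Re[of F k] by (simp add: shear_Re_def)
  finally show ?thesis .
qed

lemma nn_integral_lborel_rotation:
  fixes F :: "complex \<Rightarrow> ennreal"
  assumes [measurable]: "F \<in> borel_measurable borel" and w: "cmod w = 1"
  shows "(\<integral>\<^sup>+z. F (w * z) \<partial>lborel) = (\<integral>\<^sup>+z. F z \<partial>lborel)"
proof (cases "Im w = 0")
  case True
  with w have "w = 1 \<or> w = -1"
    by (auto simp: complex_eq_iff cmod_def abs_if split: if_splits)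
  then show ?thesis
  proof
    assume "w = -1"
    have "(\<integral>\<^sup>+z. F z \<partial>lborel)
        = (\<integral>\<^sup>+z. F z \<partial>density (distr lborel borel (\<lambda>x. 0 + (-1) *\<^sub>R x)) (\<lambda>_. \<bar>-1::real\<bar> ^ DIM(complex)))"
      by (subst lborel_affine[symmetric]) auto
    also have "\<dots> = (\<integral>\<^sup>+z. F (- z) \<partial>lborel)"
      by (simp add: nn_integral_density nn_integral_distr)
    finally show ?thesis using \<open>w = -1\<close> by simp
  qed simp
next
  case False
  with assms show ?thesis
    by (rule nn_integral_lborel_rotation_shears)
qed

lemma nn_integral_lborel_complex_affine:
  fixes F :: "complex \<Rightarrow> ennreal"
  assumes [measurable]: "F \<in> borel_measurable borel" and "a \<noteq> 0"
  shows "(\<integral>\<^sup>+z. F (a * z + b) \<partial>lborel) = ennreal (1 / (cmod a)\<^sup>2) * (\<integral>\<^sup>+z. F z \<partial>lborel)"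
proof -
  define r where "r = cmod a"
  have r: "r > 0" using \<open>a \<noteq> 0\<close> by (simp add: r_def)
  have eq: "a * z + b = b + r *\<^sub>R (a / of_real r * z)" for z
    using r by (simp add: scaleR_conv_of_real)
  have "(\<integral>\<^sup>+z. F (a * z + b) \<partial>lborel) = (\<integral>\<^sup>+z. F (b + r *\<^sub>R (a / of_real r * z)) \<partial>lborel)"
    by (simp only: eq)
  also have "\<dots> = (\<integral>\<^sup>+z. F (b + r *\<^sub>R z) \<partial>lborel)"
    using r by (intro nn_integral_lborel_rotation) (simp_all add: r_def norm_divide)
  finally have "(\<integral>\<^sup>+z. F (a * z + b) \<partial>lborel) = (\<integral>\<^sup>+z. F (b + r *\<^sub>R z) \<partial>lborel)" .
  moreover have "(\<integral>\<^sup>+z. F z \<partial>lborel) = ennreal (r\<^sup>2) * (\<integral>\<^sup>+z. F (b + r *\<^sub>R z) \<partial>lborel)"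
    using r by (subst lborel_affine[of r b]) (simp_all add: nn_integral_density nn_integral_distr nn_integral_cmult)
  moreover have "ennreal (1 / r\<^sup>2) * ennreal (r\<^sup>2) = 1"
    using r by (simp flip: ennreal_mult)
  ultimately show ?thesis
    by (simp add: r_def mult.assoc[symmetric])
qed

section \<open>Gaussian kernels\<close>

text \<open>The density of the complex Gaussian law of variance \<open>t\<close>; the Fock weight is \<open>gauss_kernel 1\<close>.\<close>

definition gauss_kernel :: "real \<Rightarrow> complex \<Rightarrow> real" where
  "gauss_kernel t z = exp (- (cmod z)\<^sup>2 / t) / (pi * t)"

lemma gauss_kernel_nonneg: "0 \<le> t \<Longrightarrow> 0 \<le> gauss_kernel t z"
  by (simp add: gauss_kernel_def)

lemma borel_measurable_gauss_kernel [measurable]: "gauss_kernel t \<in> borel_measurable borel"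
  unfolding gauss_kernel_def by measurable

lemma nn_integral_exp_minus_square: "(\<integral>\<^sup>+x. ennreal (exp (- x\<^sup>2)) \<partial>lborel) = ennreal (sqrt pi)"
proof -
  define \<sigma> where "\<sigma> = sqrt (1 / 2 :: real)"
  have "(\<integral>\<^sup>+x. ennreal (exp (- x\<^sup>2)) * ennreal (1 / sqrt pi) \<partial>lborel)
      = (\<integral>\<^sup>+x. ennreal (normal_density 0 \<sigma> x) \<partial>lborel)"
    by (intro nn_integral_cong) (simp add: normal_density_def \<sigma>_def flip: ennreal_mult)
  also have "\<dots> = 1"
    using integrable_normal_density[of \<sigma> 0] integral_normal_density[of \<sigma> 0]
    by (subst nn_integral_eq_integral) (auto simp: \<sigma>_def)
  finally have "(\<integral>\<^sup>+x. ennreal (exp (- x\<^sup>2)) \<partial>lborel) * ennreal (1 / sqrt pi) = 1"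
    by (simp add: nn_integral_multc)
  then have "(\<integral>\<^sup>+x. ennreal (exp (- x\<^sup>2)) \<partial>lborel) * (ennreal (1 / sqrt pi) * ennreal (sqrt pi))
      = ennreal (sqrt pi)"
    by (metis mult.assoc mult_1)
  then show ?thesis
    by (simp flip: ennreal_mult)
qed

lemma nn_integral_exp_minus_cmod_square: "(\<integral>\<^sup>+z. ennreal (exp (- (cmod z)\<^sup>2)) \<partial>lborel) = ennreal pi"
proof -
  have "(\<integral>\<^sup>+z. ennreal (exp (- (cmod z)\<^sup>2)) \<partial>lborel)
      = (\<integral>\<^sup>+x. \<integral>\<^sup>+y. ennreal (exp (- x\<^sup>2)) * ennreal (exp (- y\<^sup>2)) \<partial>lborel \<partial>lborel)"
    by (subst nn_integral_lborel_complex)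
      (simp_all add: cmod_def exp_diff exp_minus divide_inverse flip: ennreal_mult)
  also have "\<dots> = ennreal (sqrt pi) * ennreal (sqrt pi)"
    by (simp add: nn_integral_cmult nn_integral_multc nn_integral_exp_minus_square)
  finally show ?thesis
    by (simp flip: ennreal_mult)
qed

lemma nn_integral_gauss_kernel:
  assumes "t > 0"
  shows "(\<integral>\<^sup>+z. ennreal (gauss_kernel t (z - m)) \<partial>lborel) = 1"
proof -
  have "(\<integral>\<^sup>+z. ennreal (gauss_kernel t (of_real (sqrt t) * z + m - m)) \<partial>lborel)
      = (\<integral>\<^sup>+z. ennreal (1 / (pi * t)) * ennreal (exp (- (cmod z)\<^sup>2)) \<partial>lborel)"
    using assms by (intro nn_integral_cong) (simp add: gauss_kernel_def norm_mult power_mult_distrib flip: ennreal_mult)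
  also have "\<dots> = ennreal (1 / (pi * t)) * (\<integral>\<^sup>+z. ennreal (exp (- (cmod z)\<^sup>2)) \<partial>lborel)"
    by (simp add: nn_integral_cmult)
  also have "\<dots> = ennreal (1 / t)"
    using assms by (simp add: nn_integral_exp_minus_cmod_square flip: ennreal_mult)
  finally have "ennreal (1 / t) * (\<integral>\<^sup>+z. ennreal (gauss_kernel t (z - m)) \<partial>lborel) = ennreal (1 / t) * 1"
    using assms nn_integral_lborel_complex_affine[of "\<lambda>z. ennreal (gauss_kernel t (z - m))" "of_real (sqrt t)" m]
    by simp
  then show ?thesis
    using assms by (subst (asm) ennreal_mult_cancel_left) auto
qed

text \<open>The semigroup property of the heat kernel, in pointwise form.\<close>

lemma gauss_kernel_semigroup:
  fixes m u y :: complex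
  assumes "s > 0" "r > 0"
  defines "y0 \<equiv> (of_real r * m + of_real s * u) / of_real (s + r)"
  shows "gauss_kernel s (y - m) * gauss_kernel r (u - y)
       = gauss_kernel (s + r) (u - m) * gauss_kernel (s * r / (s + r)) (y - y0)"
proof -
  have "s + r \<noteq> 0"
    using assms by linarith
  have "(s + r) * (r * (cmod (y - m))\<^sup>2 + s * (cmod (u - y))\<^sup>2)
      = (cmod (of_real (s + r) * y - (of_real r * m + of_real s * u)))\<^sup>2 + s * r * (cmod (u - m))\<^sup>2"
    unfolding cmod_power2 by (simp add: power2_eq_square algebra_simps)
  also have "of_real (s + r) * y - (of_real r * m + of_real s * u) = of_real (s + r) * (y - y0)"
    using \<open>s + r \<noteq> 0\<close> by (simp add: y0_def field_simps flip: of_real_add)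
  finally have "(s + r) * (r * (cmod (y - m))\<^sup>2 + s * (cmod (u - y))\<^sup>2)
      = (s + r)\<^sup>2 * (cmod (y - y0))\<^sup>2 + s * r * (cmod (u - m))\<^sup>2"
    using assms(1,2) by (simp add: norm_mult power_mult_distrib del: of_real_add)
  moreover have "- X / s + - Y / r = - Z / (s + r) + - W / (s * r / (s + r))"
    if "(s + r) * (r * X + s * Y) = (s + r)\<^sup>2 * W + s * r * Z" for X Y Z W :: real
  proof -
    have "- X / s + - Y / r = - ((s + r) * (r * X + s * Y)) / ((s + r) * (s * r))"
      using assms by (simp add: divide_simps)
    also have "\<dots> = - ((s + r)\<^sup>2 * W + s * r * Z) / ((s + r) * (s * r))"
      by (simp only: that)
    also have "\<dots> = - Z / (s + r) + - W / (s * r / (s + r))"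
      using assms by (simp add: field_simps power2_eq_square)
    finally show ?thesis .
  qed
  ultimately have exponents: "- (cmod (y - m))\<^sup>2 / s + - (cmod (u - y))\<^sup>2 / r
      = - (cmod (u - m))\<^sup>2 / (s + r) + - (cmod (y - y0))\<^sup>2 / (s * r / (s + r))"
    by blast
  have "pi * (s + r) * (pi * (s * r / (s + r))) = pi * s * (pi * r)"
    using \<open>s + r \<noteq> 0\<close> by (simp add: field_simps)
  then show ?thesis
    unfolding gauss_kernel_def times_divide_times_eq exp_add[symmetric] exponents by simp
qed

lemma nn_integral_gauss_kernel_convolution:
  assumes "s > 0" "r > 0"
  shows "(\<integral>\<^sup>+y. ennreal (gauss_kernel s (y - m) * gauss_kernel r (u - y)) \<partial>lborel)
       = ennreal (gauss_kernel (s + r) (u - m))"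
proof -
  define y0 where "y0 = (of_real r * m + of_real s * u) / of_real (s + r)"
  have "(\<integral>\<^sup>+y. ennreal (gauss_kernel s (y - m) * gauss_kernel r (u - y)) \<partial>lborel)
      = (\<integral>\<^sup>+y. ennreal (gauss_kernel (s + r) (u - m)) * ennreal (gauss_kernel (s * r / (s + r)) (y - y0)) \<partial>lborel)"
    using assms by (intro nn_integral_cong)
      (simp add: gauss_kernel_semigroup y0_def gauss_kernel_nonneg flip: ennreal_mult)
  also have "\<dots> = ennreal (gauss_kernel (s + r) (u - m))"
    using assms by (simp add: nn_integral_cmult nn_integral_gauss_kernel)
  finally show ?thesis .
qed

section \<open>Sub-mean-value property and Gaussian means\<close>

lemma borel_measurable_holomorphic:
  "f holomorphic_on UNIV \<Longrightarrow> f \<in> borel_measurable borel"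
  by (intro borel_measurable_continuous_onI holomorphic_on_imp_continuous_on)

lemma sum_roots_of_unity_power:
  assumes "N > 0"
  shows "(\<Sum>k<N. (exp (2 * pi * \<i> / of_nat N) ^ k) ^ n) = (if N dvd n then of_nat N else 0)"
proof -
  define q where "q = exp (2 * pi * \<i> / of_nat N) ^ n"
  have q_eq: "q = exp (2 * pi * \<i> * of_nat n / of_nat N)"
    by (simp add: q_def exp_of_nat_mult[symmetric] algebra_simps)
  have "q ^ N = exp (of_nat N * (2 * pi * \<i> * of_nat n / of_nat N))"
    by (simp only: q_eq exp_of_nat_mult)
  also have "\<dots> = exp (of_nat n * (2 * pi * \<i>))"
    using assms by (simp add: algebra_simps)
  finally have "q ^ N = 1"
    by (simp only: exp_of_nat_mult) simp
  have "q = 1 \<longleftrightarrow> N dvd n"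
  proof
    assume "q = 1"
    then obtain j :: int where "2 * pi * real n / real N = of_int (2 * j) * pi"
      by (auto simp: q_eq exp_eq_1)
    then have "real n = real N * of_int j"
      using assms by (simp add: field_simps)
    then have "int n = int N * j"
      by (metis of_int_eq_iff of_int_mult of_int_of_nat_eq)
    then show "N dvd n"
      by (metis dvd_triv_left int_dvd_int_iff)
  next
    assume "N dvd n"
    then obtain j where "n = N * j" by auto
    then have "q = exp (of_nat j * (2 * pi * \<i>))"
      using assms by (simp add: q_eq field_simps)
    then show "q = 1"
      by (simp add: exp_of_nat_mult)
  qed
  moreover have "(exp (2 * pi * \<i> / of_nat N) ^ k) ^ n = q ^ k" for k
    by (simp add: q_def power_mult[symmetric] mult.commute)
  ultimately show ?thesis
    using \<open>q ^ N = 1\<close> by (auto simp: sum_gp_strict)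
qed

lemma roots_of_unity_mean_sums:
  assumes series: "\<And>y. (\<lambda>n. c n * y ^ n) sums H y" and "N > 0"
  shows "(\<lambda>n. if N dvd n then c n * x ^ n else 0)
           sums ((\<Sum>k<N. H (exp (2 * pi * \<i> / of_nat N) ^ k * x)) / of_nat N)"
proof -
  define \<omega> where "\<omega> = exp (2 * pi * \<i> / of_nat N)"
  have "(\<lambda>n. \<Sum>k<N. c n * (\<omega> ^ k * x) ^ n) sums (\<Sum>k<N. H (\<omega> ^ k * x))"
    by (intro sums_sum series)
  moreover have "(\<Sum>k<N. c n * (\<omega> ^ k * x) ^ n) = c n * x ^ n * (\<Sum>k<N. (\<omega> ^ k) ^ n)" for n
    by (simp add: sum_distrib_left power_mult_distrib algebra_simps)
  ultimately have "(\<lambda>n. c n * x ^ n * (if N dvd n then of_nat N else 0) / of_nat N)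
      sums ((\<Sum>k<N. H (\<omega> ^ k * x)) / of_nat N)"
    unfolding \<omega>_def sum_roots_of_unity_power[OF \<open>N > 0\<close>] by (simp add: sums_divide)
  moreover have "c n * x ^ n * (if N dvd n then of_nat N else 0) / of_nat N
      = (if N dvd n then c n * x ^ n else 0)" for n
    using \<open>N > 0\<close> by simp
  ultimately show ?thesis
    by (simp add: \<omega>_def)
qed

lemma roots_of_unity_mean_dist_le:
  assumes series: "\<And>y. (\<lambda>n. c n * y ^ n) sums H y"
    and summable: "summable (\<lambda>n. norm (c n * x ^ n))" and "N > 0"
  shows "norm ((\<Sum>k<N. H (exp (2 * pi * \<i> / of_nat N) ^ k * x)) / of_nat N - H 0)
       \<le> (\<Sum>n. norm (c (n + N) * x ^ (n + N)))"
proof -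
  define f where "f n = (if N dvd n \<and> n \<noteq> 0 then c n * x ^ n else 0)" for n
  have "(\<lambda>n. (if N dvd n then c n * x ^ n else 0) - (if n = 0 then c 0 else 0))
      sums ((\<Sum>k<N. H (exp (2 * pi * \<i> / of_nat N) ^ k * x)) / of_nat N - c 0)"
    by (intro sums_diff roots_of_unity_mean_sums series \<open>N > 0\<close> sums_single)
  moreover have "(\<lambda>n. (if N dvd n then c n * x ^ n else 0) - (if n = 0 then c 0 else 0)) = f"
    by (auto simp: f_def fun_eq_iff)
  moreover have "c 0 = H 0"
    using sums_unique2[OF powser_sums_zero series[of 0]] .
  ultimately have f_sums: "f sums ((\<Sum>k<N. H (exp (2 * pi * \<i> / of_nat N) ^ k * x)) / of_nat N - H 0)"
    by simp
  have norm_f: "norm (f n) \<le> norm (c n * x ^ n)" for n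
    by (simp add: f_def)
  have summable_f: "summable (\<lambda>n. norm (f n))"
    by (rule summable_comparison_test[OF _ summable]) (simp add: norm_f)
  have "f n = 0" if "n < N" for n
    using that by (auto simp: f_def dest: dvd_imp_le)
  then have "(\<Sum>n. norm (f n)) = (\<Sum>n. norm (f (n + N)))"
    using suminf_split_initial_segment[OF summable_f, of N] by simp
  then have "norm ((\<Sum>k<N. H (exp (2 * pi * \<i> / of_nat N) ^ k * x)) / of_nat N - H 0)
      \<le> (\<Sum>n. norm (f (n + N)))"
    using f_sums summable_norm[OF summable_f] by (simp add: sums_iff)
  also have "\<dots> \<le> (\<Sum>n. norm (c (n + N) * x ^ (n + N)))"
  proof (rule suminf_le)
    show "summable (\<lambda>n. norm (f (n + N)))"
      using summable_f summable_iff_shift[of "\<lambda>n. norm (f n)" N] by simp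
    show "summable (\<lambda>n. norm (c (n + N) * x ^ (n + N)))"
      using summable summable_iff_shift[of "\<lambda>n. norm (c n * x ^ n)" N] by simp
  qed (simp add: norm_f)
  finally show ?thesis .
qed

lemma roots_of_unity_mean_tendsto:
  assumes "H holomorphic_on UNIV"
  shows "(\<lambda>N. (\<Sum>k<Suc N. H (exp (2 * pi * \<i> / of_nat (Suc N)) ^ k * x)) / of_nat (Suc N))
           \<longlonglongrightarrow> H 0"
proof -
  define c where "c n = (deriv ^^ n) H 0 / fact n" for n
  have series: "(\<lambda>n. c n * y ^ n) sums H y" for y
  proof -
    have "H holomorphic_on ball 0 (cmod y + 1)"
      using assms by (rule holomorphic_on_subset) simp
    from holomorphic_power_series[OF this, of y] show ?thesis
      by (simp add: c_def)
  qed
  have summable: "summable (\<lambda>n. norm (c n * x ^ n))"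
    using powser_insidea[of c "of_real (cmod x + 1)" x] series[of "of_real (cmod x + 1)"]
    by (auto simp: sums_iff)
  have "(\<lambda>N. \<Sum>n. norm (c (n + Suc N) * x ^ (n + Suc N))) \<longlonglongrightarrow> 0"
    using suminf_exist_split2[OF summable] by (rule LIMSEQ_Suc)
  then have "(\<lambda>N. (\<Sum>k<Suc N. H (exp (2 * pi * \<i> / of_nat (Suc N)) ^ k * x)) / of_nat (Suc N) - H 0)
      \<longlonglongrightarrow> 0"
    by (rule Lim_null_comparison[rotated])
      (intro always_eventually allI roots_of_unity_mean_dist_le series summable, simp)
  then show ?thesis
    by (rule LIM_zero_cancel)
qed

lemma cmod_mean_square_le:
  fixes z :: "nat \<Rightarrow> complex"
  assumes "N > 0"
  shows "(cmod ((\<Sum>k<N. z k) / of_nat N))\<^sup>2 \<le> (\<Sum>k<N. (cmod (z k))\<^sup>2) / real N"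
proof -
  have "(cmod (\<Sum>k<N. z k))\<^sup>2 \<le> (\<Sum>k<N. cmod (z k) * 1)\<^sup>2"
    by (simp add: power_mono norm_sum)
  also have "\<dots> \<le> (\<Sum>k<N. (cmod (z k))\<^sup>2) * (\<Sum>k<N. 1\<^sup>2)"
    by (rule Cauchy_Schwarz_ineq_sum)
  finally show ?thesis
    using assms by (simp add: norm_divide power_divide field_simps power2_eq_square)
qed

lemma nn_integral_roots_of_unity_mean_le:
  fixes H :: "complex \<Rightarrow> complex" and \<rho> :: "real \<Rightarrow> real"
  assumes [measurable]: "H \<in> borel_measurable borel" "\<rho> \<in> borel_measurable borel"
    and "\<And>r. 0 \<le> \<rho> r" and "N > 0"
  shows "(\<integral>\<^sup>+x. ennreal ((cmod ((\<Sum>k<N. H (exp (2 * pi * \<i> / of_nat N) ^ k * x)) / of_nat N))\<^sup>2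
             * \<rho> (cmod x)) \<partial>lborel)
       \<le> (\<integral>\<^sup>+x. ennreal ((cmod (H x))\<^sup>2 * \<rho> (cmod x)) \<partial>lborel)"
    (is "?lhs \<le> ?R")
proof -
  define \<omega> where "\<omega> = exp (2 * pi * \<i> / of_nat N)"
  have rotated: "(\<integral>\<^sup>+x. ennreal ((cmod (H (\<omega> ^ k * x)))\<^sup>2 * \<rho> (cmod x)) \<partial>lborel) = ?R" for k
  proof -
    have "cmod (\<omega> ^ k) = 1"
      by (simp add: \<omega>_def norm_power norm_exp_eq_Re)
    then show ?thesis
      using nn_integral_lborel_rotation[of "\<lambda>y. ennreal ((cmod (H y))\<^sup>2 * \<rho> (cmod y))" "\<omega> ^ k"]
      by (simp add: norm_mult)
  qed
  have "ennreal ((cmod ((\<Sum>k<N. H (\<omega> ^ k * x)) / of_nat N))\<^sup>2 * \<rho> (cmod x))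
      \<le> (\<Sum>k<N. ennreal (1 / real N) * ennreal ((cmod (H (\<omega> ^ k * x)))\<^sup>2 * \<rho> (cmod x)))" for x
  proof -
    have "(cmod ((\<Sum>k<N. H (\<omega> ^ k * x)) / of_nat N))\<^sup>2 * \<rho> (cmod x)
        \<le> (\<Sum>k<N. (cmod (H (\<omega> ^ k * x)))\<^sup>2) / real N * \<rho> (cmod x)"
      using assms(3,4) by (intro mult_right_mono cmod_mean_square_le) auto
    also have "\<dots> = (\<Sum>k<N. 1 / real N * ((cmod (H (\<omega> ^ k * x)))\<^sup>2 * \<rho> (cmod x)))"
      by (simp add: sum_distrib_left sum_distrib_right sum_divide_distrib)
    finally show ?thesis
      using assms(3) by (simp add: sum_ennreal ennreal_leI flip: ennreal_mult)
  qed
  then have "?lhs \<le> (\<integral>\<^sup>+x. (\<Sum>k<N. ennreal (1 / real N) * ennreal ((cmod (H (\<omega> ^ k * x)))\<^sup>2 * \<rho> (cmod x))) \<partial>lborel)"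
    unfolding \<omega>_def by (intro nn_integral_mono)
  also have "\<dots> = (\<Sum>k<N. ennreal (1 / real N) * ?R)"
    by (simp add: nn_integral_sum nn_integral_cmult rotated)
  also have "\<dots> = ?R"
    using assms(4) by (simp add: ennreal_of_nat_eq_real_of_nat mult.assoc[symmetric] flip: ennreal_mult)
  finally show ?thesis .
qed

text \<open>The mean of \<open>H\<close> over the \<open>N\<close>-th roots of unity tends to \<open>H 0\<close>, so Fatou's lemma
  turns the previous inequality into the sub-mean-value property.\<close>

lemma holomorphic_sub_mean_value_radial:
  fixes H :: "complex \<Rightarrow> complex" and \<rho> :: "real \<Rightarrow> real"
  assumes "H holomorphic_on UNIV" and [measurable]: "\<rho> \<in> borel_measurable borel"
    and "\<And>r. 0 \<le> \<rho> r"
  shows "ennreal ((cmod (H 0))\<^sup>2) * (\<integral>\<^sup>+x. ennreal (\<rho> (cmod x)) \<partial>lborel)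
       \<le> (\<integral>\<^sup>+x. ennreal ((cmod (H x))\<^sup>2 * \<rho> (cmod x)) \<partial>lborel)"
    (is "_ \<le> ?R")
proof -
  have [measurable]: "H \<in> borel_measurable borel"
    using assms(1) by (rule borel_measurable_holomorphic)
  define g where "g N x = ennreal ((cmod ((\<Sum>k<Suc N. H (exp (2 * pi * \<i> / of_nat (Suc N)) ^ k * x))
      / of_nat (Suc N)))\<^sup>2 * \<rho> (cmod x))" for N x
  have [measurable]: "g N \<in> borel_measurable borel" for N
    unfolding g_def by measurable
  have "(\<lambda>N. g N x) \<longlonglongrightarrow> ennreal ((cmod (H 0))\<^sup>2 * \<rho> (cmod x))" for x
    unfolding g_def by (intro tendsto_ennrealI tendsto_intros roots_of_unity_mean_tendsto assms(1))
  then have "(\<integral>\<^sup>+x. ennreal ((cmod (H 0))\<^sup>2 * \<rho> (cmod x)) \<partial>lborel) = (\<integral>\<^sup>+x. liminf (\<lambda>N. g N x) \<partial>lborel)"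
    by (intro nn_integral_cong lim_imp_Liminf[symmetric]) simp_all
  also have "\<dots> \<le> liminf (\<lambda>N. \<integral>\<^sup>+x. g N x \<partial>lborel)"
    by (rule nn_integral_liminf) simp
  also have "\<dots> \<le> limsup (\<lambda>N. \<integral>\<^sup>+x. g N x \<partial>lborel)"
    by (rule Liminf_le_Limsup) simp
  also have "\<dots> \<le> ?R"
    unfolding g_def using assms(3)
    by (intro Limsup_bounded always_eventually allI nn_integral_roots_of_unity_mean_le) simp_all
  moreover have "(\<integral>\<^sup>+x. ennreal ((cmod (H 0))\<^sup>2 * \<rho> (cmod x)) \<partial>lborel)
      = ennreal ((cmod (H 0))\<^sup>2) * (\<integral>\<^sup>+x. ennreal (\<rho> (cmod x)) \<partial>lborel)"
    using assms(3) by (subst nn_integral_cmult[symmetric]) (simp_all add: ennreal_mult)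
  ultimately show ?thesis
    by simp
qed

definition gauss_mean_sq :: "real \<Rightarrow> complex \<Rightarrow> (complex \<Rightarrow> complex) \<Rightarrow> ennreal" where
  "gauss_mean_sq t m G = (\<integral>\<^sup>+u. ennreal ((cmod (G u))\<^sup>2 * gauss_kernel t (u - m)) \<partial>lborel)"

lemma gauss_mean_sq_ge:
  assumes "G holomorphic_on UNIV" and "t > 0"
  shows "ennreal ((cmod (G m))\<^sup>2) \<le> gauss_mean_sq t m G"
proof -
  have [measurable]: "G \<in> borel_measurable borel"
    using assms(1) by (rule borel_measurable_holomorphic)
  define \<rho> where "\<rho> r = exp (- r\<^sup>2 / t) / (pi * t)" for r
  have [measurable]: "\<rho> \<in> borel_measurable borel"
    unfolding \<rho>_def by measurable
  have gauss: "gauss_kernel t z = \<rho> (cmod z)" for z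
    by (simp add: gauss_kernel_def \<rho>_def)
  have "(G \<circ> (\<lambda>x. x + m)) holomorphic_on UNIV"
    by (rule holomorphic_on_compose_gen[OF _ assms(1)]) (auto intro: holomorphic_intros)
  then have "(\<lambda>x. G (x + m)) holomorphic_on UNIV"
    by (simp add: o_def)
  then have "ennreal ((cmod (G m))\<^sup>2) * (\<integral>\<^sup>+x. ennreal (gauss_kernel t (x - 0)) \<partial>lborel)
      \<le> (\<integral>\<^sup>+x. ennreal ((cmod (G (x + m)))\<^sup>2 * gauss_kernel t x) \<partial>lborel)"
    using holomorphic_sub_mean_value_radial[of "\<lambda>x. G (x + m)" \<rho>] assms(2)
    by (simp add: gauss \<rho>_def)
  also have "\<dots> = gauss_mean_sq t m G"
    unfolding gauss_mean_sq_def
    using nn_integral_lborel_complex_affine[of "\<lambda>u. ennreal ((cmod (G u))\<^sup>2 * gauss_kernel t (u - m))" 1 m]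
    by simp
  finally show ?thesis
    using nn_integral_gauss_kernel[OF assms(2), of 0] by simp
qed

text \<open>Writing the Gaussian of variance \<open>t\<close> as the convolution of those of variances \<open>s\<close> and
  \<open>t - s\<close>, the mean of variance \<open>t\<close> becomes an average of means of variance \<open>t - s\<close>, each of
  which dominates the value at its centre.\<close>

lemma gauss_mean_sq_mono:
  assumes "G holomorphic_on UNIV" and "0 < s" "s \<le> t"
  shows "gauss_mean_sq s m G \<le> gauss_mean_sq t m G"
proof (cases "s = t")
  case False
  define r where "r = t - s"
  have "r > 0" "t = s + r"
    using assms False by (simp_all add: r_def)
  have [measurable]: "G \<in> borel_measurable borel"
    using assms(1) by (rule borel_measurable_holomorphic)
  have "ennreal ((cmod (G u))\<^sup>2 * gauss_kernel t (u - m))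
      = (\<integral>\<^sup>+y. ennreal ((cmod (G u))\<^sup>2) * ennreal (gauss_kernel s (y - m) * gauss_kernel r (u - y)) \<partial>lborel)"
    for u
  proof -
    have "(\<integral>\<^sup>+y. ennreal ((cmod (G u))\<^sup>2) * ennreal (gauss_kernel s (y - m) * gauss_kernel r (u - y)) \<partial>lborel)
        = ennreal ((cmod (G u))\<^sup>2) * ennreal (gauss_kernel t (u - m))"
      unfolding \<open>t = s + r\<close> nn_integral_gauss_kernel_convolution[OF \<open>0 < s\<close> \<open>r > 0\<close>, symmetric]
      by (rule nn_integral_cmult) measurable
    then show ?thesis
      using \<open>0 < s\<close> \<open>r > 0\<close> \<open>t = s + r\<close> by (simp add: ennreal_mult gauss_kernel_nonneg)
  qed
  then have "gauss_mean_sq t m G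
      = (\<integral>\<^sup>+u. \<integral>\<^sup>+y. ennreal ((cmod (G u))\<^sup>2) * ennreal (gauss_kernel s (y - m) * gauss_kernel r (u - y))
          \<partial>lborel \<partial>lborel)"
    by (simp add: gauss_mean_sq_def)
  also have "\<dots> = (\<integral>\<^sup>+y. \<integral>\<^sup>+u. ennreal ((cmod (G u))\<^sup>2) * ennreal (gauss_kernel s (y - m) * gauss_kernel r (u - y))
          \<partial>lborel \<partial>lborel)"
    by (rule lborel_pair.Fubini'[symmetric]) measurable
  also have "\<dots> = (\<integral>\<^sup>+y. ennreal (gauss_kernel s (y - m)) * gauss_mean_sq r y G \<partial>lborel)"
    unfolding gauss_mean_sq_def using \<open>0 < s\<close> \<open>r > 0\<close>
    by (intro nn_integral_cong)
      (simp add: nn_integral_cmult[symmetric] gauss_kernel_nonneg mult_ac flip: ennreal_mult)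
  also have "\<dots> \<ge> (\<integral>\<^sup>+y. ennreal (gauss_kernel s (y - m)) * ennreal ((cmod (G y))\<^sup>2) \<partial>lborel)"
    using \<open>r > 0\<close> by (intro nn_integral_mono mult_left_mono gauss_mean_sq_ge assms(1)) simp_all
  finally show ?thesis
    using \<open>0 < s\<close> by (simp add: gauss_mean_sq_def gauss_kernel_nonneg mult.commute flip: ennreal_mult)
qed simp


section \<open>The weighted composition operator\<close>

lemma norm_exp_power2: "(cmod (exp w))\<^sup>2 = exp (2 * Re w)"
  by (simp add: norm_exp_eq_Re power2_eq_square flip: exp_add)

text \<open>Completing the square: the factor \<open>exp (- cnj p * u)\<close> moves the centre of the Gaussian
  weight from \<open>0\<close> to \<open>p\<close>.\<close>

lemma fock_nn_eq_gauss_mean_sq: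
  assumes [measurable]: "f \<in> borel_measurable borel"
  shows "fock_nn f = ennreal (exp ((cmod p)\<^sup>2)) * gauss_mean_sq 1 p (\<lambda>u. f u * exp (- cnj p * u))"
proof -
  have "(cmod (f u))\<^sup>2 * exp (- (cmod u)\<^sup>2) / pi
      = exp ((cmod p)\<^sup>2) * ((cmod (f u * exp (- cnj p * u)))\<^sup>2 * gauss_kernel 1 (u - p))" for u
  proof -
    have norm: "(cmod (f u * exp (- cnj p * u)))\<^sup>2 = (cmod (f u))\<^sup>2 * exp (2 * Re (- cnj p * u))"
      by (simp only: norm_mult power_mult_distrib norm_exp_power2)
    have "- (cmod u)\<^sup>2 = (cmod p)\<^sup>2 + (2 * Re (- cnj p * u) + - (cmod (u - p))\<^sup>2)"
      unfolding cmod_power2 by (simp add: power2_eq_square algebra_simps)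
    then have "exp (- (cmod u)\<^sup>2) = exp ((cmod p)\<^sup>2) * (exp (2 * Re (- cnj p * u)) * exp (- (cmod (u - p))\<^sup>2))"
      by (simp only: exp_add)
    then show ?thesis
      unfolding norm gauss_kernel_def by simp
  qed
  then show ?thesis
    unfolding fock_nn_def gauss_mean_sq_def
    by (simp add: nn_integral_cmult[symmetric] ennreal_mult gauss_kernel_nonneg)
qed

lemma gauss_mean_sq_const: "t > 0 \<Longrightarrow> gauss_mean_sq t m (\<lambda>_. C) = ennreal ((cmod C)\<^sup>2)"
  unfolding gauss_mean_sq_def
  by (simp add: nn_integral_cmult ennreal_mult gauss_kernel_nonneg nn_integral_gauss_kernel)

lemma fock_nn_kernel: "fock_nn (\<lambda>z. C * exp (cnj p * z)) = ennreal ((cmod C)\<^sup>2 * exp ((cmod p)\<^sup>2))"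
proof -
  have "(\<lambda>u. C * exp (cnj p * u) * exp (- cnj p * u)) = (\<lambda>_. C)"
    by (simp add: mult.assoc flip: exp_add)
  then show ?thesis
    by (simp add: fock_nn_eq_gauss_mean_sq[where p = p] gauss_mean_sq_const ennreal_mult mult.commute)
qed

lemma kernel_in_fock_space: "(\<lambda>z. C * exp (cnj p * z)) \<in> fock_space"
  unfolding fock_space_def by (auto simp: fock_nn_kernel intro!: holomorphic_intros)

lemma fock_point_bound:
  assumes "f holomorphic_on UNIV"
  shows "ennreal ((cmod (f p))\<^sup>2) \<le> ennreal (exp ((cmod p)\<^sup>2)) * fock_nn f"
proof -
  have "(\<lambda>u. f u * exp (- cnj p * u)) holomorphic_on UNIV"
    using assms by (intro holomorphic_intros)
  then have "ennreal ((cmod (f p * exp (- cnj p * p)))\<^sup>2) \<le> gauss_mean_sq 1 p (\<lambda>u. f u * exp (- cnj p * u))"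
    by (rule gauss_mean_sq_ge) simp
  moreover have "(cmod (exp (- cnj p * p)))\<^sup>2 = exp (- 2 * (cmod p)\<^sup>2)"
    unfolding norm_exp_power2 unfolding cmod_power2 by (simp add: power2_eq_square)
  then have "(cmod (f p * exp (- cnj p * p)))\<^sup>2 = (cmod (f p))\<^sup>2 * exp (- 2 * (cmod p)\<^sup>2)"
    by (simp only: norm_mult power_mult_distrib)
  ultimately have bound: "ennreal ((cmod (f p))\<^sup>2 * exp (- 2 * (cmod p)\<^sup>2))
      \<le> gauss_mean_sq 1 p (\<lambda>u. f u * exp (- cnj p * u))"
    by simp
  have real_eq: "(cmod (f p))\<^sup>2 = exp ((cmod p)\<^sup>2) * (exp ((cmod p)\<^sup>2) * ((cmod (f p))\<^sup>2 * exp (- 2 * (cmod p)\<^sup>2)))"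
    by (simp add: mult_exp_exp flip: exp_add)
  have "ennreal ((cmod (f p))\<^sup>2)
      = ennreal (exp ((cmod p)\<^sup>2)) * (ennreal (exp ((cmod p)\<^sup>2)) * ennreal ((cmod (f p))\<^sup>2 * exp (- 2 * (cmod p)\<^sup>2)))"
    by (subst (1) real_eq) (simp add: ennreal_mult)
  also have "\<dots> \<le> ennreal (exp ((cmod p)\<^sup>2)) * (ennreal (exp ((cmod p)\<^sup>2)) * gauss_mean_sq 1 p (\<lambda>u. f u * exp (- cnj p * u)))"
    by (intro mult_left_mono bound) simp_all
  also have "\<dots> = ennreal (exp ((cmod p)\<^sup>2)) * fock_nn f"
    by (simp add: fock_nn_eq_gauss_mean_sq[OF borel_measurable_holomorphic[OF assms], of p])
  finally show ?thesis .
qed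

lemma wcomp_fock_kernel_affine:
  "wcomp (fock_kernel c) (\<lambda>z. a * z + b) f = (\<lambda>z. exp (cnj c * z) * f (a * z + b))"
  by (simp add: wcomp_def fock_kernel_def)

lemma wcomp_fock_kernel_affine_kernel:
  "wcomp (fock_kernel c) (\<lambda>z. a * z + b) (\<lambda>z. C * exp (cnj q * z))
     = (\<lambda>z. (C * exp (cnj q * b)) * exp (cnj (c + cnj a * q) * z))"
  unfolding wcomp_fock_kernel_affine by (simp add: algebra_simps flip: exp_add)

text \<open>By \<open>fock_nn_wcomp_kernel\<close>, \<open>exp (kernel_exponent a b c q)\<close> is the factor by which the
  operator multiplies the squared norm of the kernel at \<open>q\<close>.\<close>

definition kernel_exponent :: "complex \<Rightarrow> complex \<Rightarrow> complex \<Rightarrow> complex \<Rightarrow> real" where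
  "kernel_exponent a b c q = (cmod (c + cnj a * q))\<^sup>2 + 2 * Re (cnj q * b) - (cmod q)\<^sup>2"

lemma kernel_exponent_eq:
  "kernel_exponent a b c q = (cmod c)\<^sup>2 + 2 * Re (cnj q * (b + a * c)) - (1 - (cmod a)\<^sup>2) * (cmod q)\<^sup>2"
  unfolding kernel_exponent_def cmod_power2 by (simp add: power2_eq_square algebra_simps)

lemma fock_nn_wcomp_kernel:
  "fock_nn (wcomp (fock_kernel c) (\<lambda>z. a * z + b) (\<lambda>z. C * exp (cnj q * z)))
     = ennreal (exp (kernel_exponent a b c q)) * fock_nn (\<lambda>z. C * exp (cnj q * z))"
proof -
  have "(cmod (C * exp (cnj q * b)))\<^sup>2 * exp ((cmod (c + cnj a * q))\<^sup>2)
      = exp (kernel_exponent a b c q) * ((cmod C)\<^sup>2 * exp ((cmod q)\<^sup>2))"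
    by (simp add: kernel_exponent_def norm_mult power_mult_distrib norm_exp_power2 mult_exp_exp
        del: norm_exp_eq_Re flip: exp_add)
  then show ?thesis
    unfolding wcomp_fock_kernel_affine_kernel fock_nn_kernel by (simp add: ennreal_mult)
qed

lemma fock_nn_wcomp_affine:
  assumes [measurable]: "f \<in> borel_measurable borel" and "a \<noteq> 0"
  shows "fock_nn (\<lambda>z. exp (cnj c * z) * f (a * z + b))
     = ennreal (exp ((cmod (c + cnj a * q))\<^sup>2 + 2 * Re (cnj q * b)))
       * gauss_mean_sq ((cmod a)\<^sup>2) (b + a * (c + cnj a * q)) (\<lambda>v. f v * exp (- cnj q * v))"
proof -
  define p s m where "p = c + cnj a * q" and "s = (cmod a)\<^sup>2" and "m = b + a * p"
  define G where "G v = f v * exp (- cnj q * v)" for v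
  have "s > 0"
    using assms(2) by (simp add: s_def)
  have [measurable]: "G \<in> borel_measurable borel"
    unfolding G_def by measurable
  have "exp (cnj c * z) * f (a * z + b) * exp (- cnj p * z) = exp (cnj q * b) * G (a * z + b)" for z
  proof -
    have "cnj c * z + - cnj p * z = cnj q * b + - cnj q * (a * z + b)"
      by (simp add: p_def algebra_simps)
    then show ?thesis
      by (simp add: G_def mult_ac flip: exp_add)
  qed
  moreover have "gauss_kernel 1 (z - p) = s * gauss_kernel s (a * z + b - m)" for z
  proof -
    have "(cmod (a * z + b - m))\<^sup>2 / s = (cmod (z - p))\<^sup>2"
      using \<open>s > 0\<close> by (simp add: m_def s_def norm_mult power_mult_distrib flip: right_diff_distrib)
    then show ?thesis
      using \<open>s > 0\<close> by (simp add: gauss_kernel_def)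
  qed
  ultimately have "gauss_mean_sq 1 p (\<lambda>z. exp (cnj c * z) * f (a * z + b) * exp (- cnj p * z))
      = (\<integral>\<^sup>+z. ennreal (exp (2 * Re (cnj q * b)) * s)
           * ennreal ((cmod (G (a * z + b)))\<^sup>2 * gauss_kernel s (a * z + b - m)) \<partial>lborel)"
    unfolding gauss_mean_sq_def using \<open>s > 0\<close>
    by (intro nn_integral_cong)
      (simp add: norm_mult power_mult_distrib norm_exp_power2 gauss_kernel_nonneg mult_ac
        del: norm_exp_eq_Re flip: ennreal_mult)
  also have "\<dots> = ennreal (exp (2 * Re (cnj q * b)) * s) * ennreal (1 / s) * gauss_mean_sq s m G"
  proof -
    define F where "F v = ennreal ((cmod (G v))\<^sup>2 * gauss_kernel s (v - m))" for v
    have "F \<in> borel_measurable borel"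
      unfolding F_def by measurable
    from nn_integral_lborel_complex_affine[OF this assms(2), of b] show ?thesis
      by (simp add: nn_integral_cmult F_def gauss_mean_sq_def s_def mult.assoc)
  qed
  also have "\<dots> = ennreal (exp (2 * Re (cnj q * b))) * gauss_mean_sq s m G"
    using \<open>s > 0\<close> by (simp flip: ennreal_mult)
  finally show ?thesis
    using fock_nn_eq_gauss_mean_sq[of "\<lambda>z. exp (cnj c * z) * f (a * z + b)" p]
    by (simp add: p_def s_def m_def G_def[abs_def] mult.assoc exp_add ennreal_mult)
qed

lemma fock_nn_wcomp_const_le:
  assumes "f holomorphic_on UNIV"
  shows "fock_nn (wcomp (fock_kernel c) (\<lambda>_. b) f) \<le> ennreal (exp ((cmod c)\<^sup>2 + (cmod b)\<^sup>2)) * fock_nn f"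
proof -
  have "fock_nn (wcomp (fock_kernel c) (\<lambda>_. b) f) = ennreal (exp ((cmod c)\<^sup>2)) * ennreal ((cmod (f b))\<^sup>2)"
    using fock_nn_kernel[of "f b" c] by (simp add: wcomp_def fock_kernel_def mult.commute ennreal_mult)
  also have "\<dots> \<le> ennreal (exp ((cmod c)\<^sup>2)) * (ennreal (exp ((cmod b)\<^sup>2)) * fock_nn f)"
    by (intro mult_left_mono fock_point_bound assms) simp
  finally show ?thesis
    by (simp add: mult.assoc ennreal_mult exp_add)
qed

text \<open>For \<open>|a| < 1\<close> the choice of \<open>q\<close> makes the centre \<open>b + a (c + cnj a q)\<close> equal to \<open>q\<close>
  itself, so the Gaussian mean of variance \<open>|a|\<^sup>2\<close> can be compared with the one of variance \<open>1\<close>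
  that computes \<open>fock_nn f\<close>.\<close>

lemma fock_nn_wcomp_affine_le:
  fixes a b c :: complex
  assumes "f holomorphic_on UNIV" and "cmod a < 1"
  defines "q \<equiv> (b + a * c) / of_real (1 - (cmod a)\<^sup>2)"
  shows "fock_nn (wcomp (fock_kernel c) (\<lambda>z. a * z + b) f)
           \<le> ennreal (exp (kernel_exponent a b c q)) * fock_nn f"
proof (cases "a = 0")
  case True
  have "Re (cnj b * b) = (cmod b)\<^sup>2"
    by (simp add: mult.commute flip: complex_norm_square)
  then have "kernel_exponent a b c q = (cmod c)\<^sup>2 + (cmod b)\<^sup>2"
    using True by (simp add: q_def kernel_exponent_eq)
  then show ?thesis
    using fock_nn_wcomp_const_le[OF assms(1), of c b] True by simp
next
  case False
  define s where "s = (cmod a)\<^sup>2"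
  have s: "0 < s" "s < 1"
    using False assms(2) by (simp_all add: s_def abs_square_less_1)
  have centre: "b + a * (c + cnj a * q) = q"
  proof -
    have "a * cnj a = of_real s"
      by (simp only: s_def complex_norm_square)
    moreover have "q * of_real (1 - s) = b + a * c"
      using s by (simp add: q_def flip: s_def)
    moreover have "b + a * (c + cnj a * q) = b + a * c + q * (a * cnj a)"
      by (simp add: algebra_simps)
    ultimately show ?thesis
      by (simp add: algebra_simps)
  qed
  have "(\<lambda>v. f v * exp (- cnj q * v)) holomorphic_on UNIV"
    using assms(1) by (intro holomorphic_intros)
  then have "gauss_mean_sq s q (\<lambda>v. f v * exp (- cnj q * v)) \<le> gauss_mean_sq 1 q (\<lambda>v. f v * exp (- cnj q * v))"
    using s by (intro gauss_mean_sq_mono) simp_all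
  then have "fock_nn (wcomp (fock_kernel c) (\<lambda>z. a * z + b) f)
      \<le> ennreal (exp ((cmod (c + cnj a * q))\<^sup>2 + 2 * Re (cnj q * b)))
        * gauss_mean_sq 1 q (\<lambda>v. f v * exp (- cnj q * v))"
    using fock_nn_wcomp_affine[OF borel_measurable_holomorphic[OF assms(1)] False, of c b q]
    by (simp add: wcomp_fock_kernel_affine centre s_def mult_left_mono)
  also have "\<dots> = ennreal (exp (kernel_exponent a b c q))
      * (ennreal (exp ((cmod q)\<^sup>2)) * gauss_mean_sq 1 q (\<lambda>v. f v * exp (- cnj q * v)))"
    by (simp add: kernel_exponent_def mult.assoc[symmetric] flip: ennreal_mult exp_add)
  also have "\<dots> = ennreal (exp (kernel_exponent a b c q)) * fock_nn f"
    using fock_nn_eq_gauss_mean_sq[OF borel_measurable_holomorphic[OF assms(1)], of q] by simp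
  finally show ?thesis .
qed

lemma fock_nn_wcomp_unimodular:
  assumes [measurable]: "f \<in> borel_measurable borel" and "cmod a = 1" and "b + a * c = 0"
  shows "fock_nn (wcomp (fock_kernel c) (\<lambda>z. a * z + b) f) = ennreal (exp (kernel_exponent a b c 0)) * fock_nn f"
proof -
  have "a \<noteq> 0"
    using assms(2) by auto
  then show ?thesis
    using fock_nn_wcomp_affine[of f a c b 0] fock_nn_eq_gauss_mean_sq[of f 0] assms
    by (simp add: wcomp_fock_kernel_affine kernel_exponent_def)
qed

lemma real_sqrt_exp: "sqrt (exp x) = exp (x / 2)"
  by (rule real_sqrt_unique) (simp_all add: power2_eq_square flip: exp_add)

lemma fock_op_norm_eqI:
  assumes "V \<ge> 0"
    and le: "\<And>f. f \<in> fock_space \<Longrightarrow> fock_nn (T f) \<le> ennreal V * fock_nn f"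
    and "f0 \<in> fock_space" "fock_nn f0 = 1" "fock_nn (T f0) = ennreal V"
  shows "fock_op_norm T = sqrt V"
proof -
  define S where "S = {fock_norm (T f) | f. f \<in> fock_space \<and> fock_norm f \<le> 1}"
  have "sqrt V \<in> S"
    unfolding S_def using assms by (auto simp: fock_norm_def intro!: exI[of _ f0])
  moreover have "x \<le> sqrt V" if "x \<in> S" for x
  proof -
    obtain f where f: "f \<in> fock_space" "fock_norm f \<le> 1" and x: "x = fock_norm (T f)"
      using \<open>x \<in> S\<close> unfolding S_def by blast
    have "fock_nn f < \<infinity>"
      using f by (simp add: fock_space_def)
    then have "enn2real (fock_nn (T f)) \<le> enn2real (ennreal V * fock_nn f)"
      using le[OF f(1)] by (intro enn2real_mono) (auto simp: ennreal_mult_less_top)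
    then have "x \<le> sqrt (V * enn2real (fock_nn f))"
      using \<open>V \<ge> 0\<close> by (simp add: x fock_norm_def enn2real_mult)
    also have "\<dots> = sqrt V * fock_norm f"
      by (simp add: fock_norm_def real_sqrt_mult)
    also have "\<dots> \<le> sqrt V"
      using f(2) \<open>V \<ge> 0\<close> by (intro mult_left_le) auto
    finally show ?thesis .
  qed
  ultimately show ?thesis
    unfolding fock_op_norm_def S_def[symmetric] by (rule cSup_eq_maximum)
qed

text \<open>Once \<open>exp (kernel_exponent a b c q)\<close> bounds \<open>\<parallel>T f\<parallel>\<^sup>2 / \<parallel>f\<parallel>\<^sup>2\<close>, the normalised
  kernel at \<open>q\<close> attains it.\<close>

lemma fock_op_norm_wcomp_eq:
  assumes "\<And>f. f \<in> fock_space \<Longrightarrow>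
    fock_nn (wcomp (fock_kernel c) (\<lambda>z. a * z + b) f) \<le> ennreal (exp (kernel_exponent a b c q)) * fock_nn f"
  shows "fock_op_norm (wcomp (fock_kernel c) (\<lambda>z. a * z + b)) = exp (kernel_exponent a b c q / 2)"
proof -
  define f0 where "f0 z = of_real (exp (- (cmod q)\<^sup>2 / 2)) * exp (cnj q * z)" for z
  have "fock_nn f0 = 1"
    by (simp add: f0_def[abs_def] fock_nn_kernel power2_eq_square flip: exp_add)
  then have "fock_op_norm (wcomp (fock_kernel c) (\<lambda>z. a * z + b)) = sqrt (exp (kernel_exponent a b c q))"
    using assms kernel_in_fock_space fock_nn_wcomp_kernel
    by (intro fock_op_norm_eqI[of _ _ f0]) (simp_all add: f0_def[abs_def])
  then show ?thesis
    by (simp add: real_sqrt_exp)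
qed

lemma fock_bounded_imp_bdd_above_kernel_exponent:
  assumes "fock_bounded (wcomp (fock_kernel c) (\<lambda>z. a * z + b))"
  shows "bdd_above (range (kernel_exponent a b c))"
proof -
  obtain M where M: "\<And>f. f \<in> fock_space \<Longrightarrow>
      fock_norm (wcomp (fock_kernel c) (\<lambda>z. a * z + b) f) \<le> M * fock_norm f"
    using assms unfolding fock_bounded_def by blast
  have "kernel_exponent a b c q \<le> M\<^sup>2" for q
  proof -
    have "sqrt (exp (kernel_exponent a b c q)) * sqrt (exp ((cmod q)\<^sup>2)) \<le> M * sqrt (exp ((cmod q)\<^sup>2))"
      using M[OF kernel_in_fock_space[of 1 q]]
      unfolding fock_norm_def fock_nn_wcomp_kernel fock_nn_kernel
      by (simp add: real_sqrt_mult flip: ennreal_mult)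
    then have "sqrt (exp (kernel_exponent a b c q)) \<le> M"
      by simp
    then have "exp (kernel_exponent a b c q) \<le> M\<^sup>2"
      by (rule sqrt_le_D)
    then show ?thesis
      using exp_gt_self[of "kernel_exponent a b c q"] by linarith
  qed
  then show ?thesis
    by (intro bdd_aboveI2)
qed

text \<open>For \<open>|a| = 1\<close> the exponent is affine in \<open>q\<close> with slope \<open>2 (b + a c)\<close>, so it is bounded
  only if \<open>b + a c = 0\<close>.\<close>

lemma fock_bounded_unimodular_imp_add_eq_0:
  assumes "cmod a = 1" and "fock_bounded (wcomp (fock_kernel c) (\<lambda>z. a * z + b))"
  shows "b + a * c = 0"
proof (rule ccontr)
  assume "b + a * c \<noteq> 0"
  obtain B where B: "\<And>q. kernel_exponent a b c q \<le> B"
    using fock_bounded_imp_bdd_above_kernel_exponent[OF assms(2)] by (auto simp: bdd_above_def)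
  define \<beta> where "\<beta> = b + a * c"
  define t where "t = (B + 1) / (2 * (cmod \<beta>)\<^sup>2)"
  have "cnj (of_real t * \<beta>) * \<beta> = of_real (t * (cmod \<beta>)\<^sup>2)"
    by (simp only: of_real_mult complex_norm_square) (simp add: mult_ac)
  then have "Re (cnj (of_real t * \<beta>) * \<beta>) = t * (cmod \<beta>)\<^sup>2"
    by (simp only: Re_complex_of_real)
  then have "kernel_exponent a b c (of_real t * \<beta>) = (cmod c)\<^sup>2 + 2 * (t * (cmod \<beta>)\<^sup>2)"
    using assms(1) by (simp add: kernel_exponent_eq flip: \<beta>_def)
  also have "2 * (t * (cmod \<beta>)\<^sup>2) = B + 1"
    using \<open>b + a * c \<noteq> 0\<close> by (simp add: t_def \<beta>_def)
  finally have "kernel_exponent a b c (of_real t * \<beta>) = (cmod c)\<^sup>2 + (B + 1)" .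
  then show False
    using B[of "of_real t * \<beta>"] by (smt (verit) zero_le_power2)
qed

lemma kernel_exponent_maximum:
  assumes "cmod a < 1"
  shows "kernel_exponent a b c ((b + a * c) / of_real (1 - (cmod a)\<^sup>2))
       = (cmod c)\<^sup>2 + (cmod (b + a * c))\<^sup>2 / (1 - (cmod a)\<^sup>2)"
proof -
  define \<beta> d where "\<beta> = b + a * c" and "d = 1 - (cmod a)\<^sup>2"
  have "d > 0"
    using assms by (simp add: d_def abs_square_less_1)
  have "cnj (\<beta> / of_real d) * \<beta> = of_real ((cmod \<beta>)\<^sup>2 / d)"
    by (simp only: of_real_divide complex_norm_square) (simp add: mult.commute)
  then have "Re (cnj (\<beta> / of_real d) * \<beta>) = (cmod \<beta>)\<^sup>2 / d"
    by (simp only: Re_complex_of_real)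
  then show ?thesis
    using \<open>d > 0\<close> unfolding kernel_exponent_eq \<beta>_def[symmetric] d_def[symmetric]
    by (simp add: norm_divide power_divide field_simps power2_eq_square)
qed

lemma disc_exponent_eq:
  fixes a b c :: complex
  assumes "cmod a < 1"
  shows "(cmod c)\<^sup>2 + (cmod (b + a * c))\<^sup>2 / (1 - (cmod a)\<^sup>2)
       = 2 * Re (cnj c * b / (1 - a)) + (cmod (c * (1 - a) / (cnj a - 1) + b))\<^sup>2 / (1 - (cmod a)\<^sup>2)"
proof -
  define s where "s = (cmod a)\<^sup>2"
  have "s < 1"
    using assms by (simp add: s_def abs_square_less_1)
  then have "1 - s \<noteq> 0" "a \<noteq> 1"
    by (auto simp: s_def)
  have s: "s = (Re a)\<^sup>2 + (Im a)\<^sup>2"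
    by (simp add: s_def cmod_power2)
  define k where "k = 1 / (1 - a)"
  have "k * (1 - a) = 1"
    using \<open>a \<noteq> 1\<close> by (simp add: k_def)
  then have k: "Re k * (1 - Re a) + Im k * Im a = 1" "Im k * (1 - Re a) - Re k * Im a = 0"
    by (simp_all add: complex_eq_iff algebra_simps)
  have "c * (1 - a) / (cnj a - 1) = - c * (1 - a) * cnj k"
    using \<open>a \<noteq> 1\<close> by (simp add: k_def divide_simps) (simp add: algebra_simps)
  moreover have "(1 - s) * (cmod c)\<^sup>2 + (cmod (b + a * c))\<^sup>2
      = (1 - s) * (2 * Re (cnj c * b * k)) + (cmod (- c * (1 - a) * cnj k + b))\<^sup>2"
    unfolding cmod_power2 using k s by simp algebra
  ultimately show ?thesis
    using \<open>1 - s \<noteq> 0\<close> by (simp add: k_def s_def field_simps)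
qed

lemma Re_divide_one_minus_cnj:
  assumes "cmod a = 1" and "a \<noteq> 1"
  shows "Re (of_real r / (1 - cnj a)) = r / 2"
proof -
  have a: "(Re a)\<^sup>2 + (Im a)\<^sup>2 = 1"
    using assms(1) by (simp add: cmod_power2 [symmetric])
  then have "Re a \<noteq> 1"
    using assms(2) by (auto simp: complex_eq_iff)
  have "(1 - Re a)\<^sup>2 + (Im a)\<^sup>2 = 2 * (1 - Re a)"
    using a by (simp add: power2_eq_square algebra_simps)
  then show ?thesis
    using \<open>Re a \<noteq> 1\<close> by (simp add: Re_divide power2_eq_square field_simps)
qed

lemma fock_op_norm_wcomp_disc:
  assumes "cmod a < 1"
  shows "fock_op_norm (wcomp (fock_kernel c) (\<lambda>z. a * z + b))
       = exp (((cmod c)\<^sup>2 + (cmod (b + a * c))\<^sup>2 / (1 - (cmod a)\<^sup>2)) / 2)"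
  using fock_op_norm_wcomp_eq[OF fock_nn_wcomp_affine_le] kernel_exponent_maximum assms
  by (simp add: fock_space_def)

lemma fock_op_norm_wcomp_unimodular:
  assumes "cmod a = 1" and "fock_bounded (wcomp (fock_kernel c) (\<lambda>z. a * z + b))"
  shows "fock_op_norm (wcomp (fock_kernel c) (\<lambda>z. a * z + b)) = exp ((cmod b)\<^sup>2 / 2)"
proof -
  have "b + a * c = 0"
    using assms by (rule fock_bounded_unimodular_imp_add_eq_0)
  then have "cmod b = cmod c"
    using assms(1) by (metis add_eq_0_iff2 mult_cancel_right2 norm_minus_cancel norm_mult)
  moreover have "fock_op_norm (wcomp (fock_kernel c) (\<lambda>z. a * z + b)) = exp (kernel_exponent a b c 0 / 2)"
    using \<open>b + a * c = 0\<close> assms(1)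
    by (intro fock_op_norm_wcomp_eq eq_refl fock_nn_wcomp_unimodular)
      (simp_all add: fock_space_def borel_measurable_holomorphic)
  ultimately show ?thesis
    by (simp add: kernel_exponent_def)
qed

theorem theorem4p2:
  fixes a b c :: complex
  assumes "cmod a \<le> 1"
    and "fock_bounded (wcomp (fock_kernel c) (\<lambda>z. a * z + b))"
  shows "(cmod a < 1 \<longrightarrow>
           fock_op_norm (wcomp (fock_kernel c) (\<lambda>z. a * z + b)) =
             cmod (exp (cnj c * b / (1 - a))) *
             exp ((1/2) * ((cmod (c * (1 - a) / (cnj a - 1) + b))\<^sup>2 / (1 - (cmod a)\<^sup>2))))
       \<and> (cmod a = 1 \<and> a \<noteq> 1 \<longrightarrow>
           fock_op_norm (wcomp (fock_kernel c) (\<lambda>z. a * z + b)) =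
             cmod (exp (complex_of_real ((cmod b)\<^sup>2) / (1 - cnj a))))
       \<and> (a = 1 \<longrightarrow>
           fock_op_norm (wcomp (fock_kernel c) (\<lambda>z. a * z + b)) = exp ((cmod b)\<^sup>2 / 2))"
proof (intro conjI impI)
  assume "cmod a < 1"
  then show "fock_op_norm (wcomp (fock_kernel c) (\<lambda>z. a * z + b)) =
      cmod (exp (cnj c * b / (1 - a))) *
      exp ((1/2) * ((cmod (c * (1 - a) / (cnj a - 1) + b))\<^sup>2 / (1 - (cmod a)\<^sup>2)))"
    unfolding fock_op_norm_wcomp_disc[OF \<open>cmod a < 1\<close>] disc_exponent_eq[OF \<open>cmod a < 1\<close>]
    by (simp add: norm_exp_eq_Re add_divide_distrib exp_add)
next
  assume "cmod a = 1 \<and> a \<noteq> 1"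
  then show "fock_op_norm (wcomp (fock_kernel c) (\<lambda>z. a * z + b)) =
      cmod (exp (complex_of_real ((cmod b)\<^sup>2) / (1 - cnj a)))"
    using fock_op_norm_wcomp_unimodular[OF _ assms(2)] Re_divide_one_minus_cnj[of a "(cmod b)\<^sup>2"]
    by (simp add: norm_exp_eq_Re del: of_real_power)
next
  assume "a = 1"
  then show "fock_op_norm (wcomp (fock_kernel c) (\<lambda>z. a * z + b)) = exp ((cmod b)\<^sup>2 / 2)"
    using fock_op_norm_wcomp_unimodular[OF _ assms(2)] by simp
qed

end
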